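(* Let $(\alpha_0,\beta_0)\in U$ with $K(\alpha_0,\beta_0)\in\mathfrak M_\infty$, and let $(\alpha_n,\beta_n)\in U$ with $(\alpha_n,\beta_n)\to(\alpha_0,\beta_0)$, $\mathcal P_n=\{[0,\alpha_n],[\alpha_n,1]\}$ for $n=0,1,\dots$. Then for every $m\ge1$ there is $\delta_m>0$ such that for every $n$ every interval of $\mathcal P_n^{(m)}=\bigvee_{j=0}^{m-1}T^{-j}_{\alpha_n,\beta_n}(\mathcal P_n)$ has Lebesgue measure at least $\delta_m$.
   Context: For $0<\alpha<1$ and $0\le\beta\le1$ the skew tent map is $T_{\alpha,\beta}(x)=\frac{\beta}{\alpha}x$ for $0\le x\le\alpha$ and $T_{\alpha,\beta}(x)=\frac{\beta}{1-\alpha}(1-x)$ for $\alpha<x\le1$. $U=\{(\alpha,\beta): \tfrac12<\beta\le1,\ 1-\beta<\alpha<\beta\}$. The kneading sequence $K(\alpha,\beta)$ is built from the symbols $\mathfrak m_n=L,C,R$ according as $T^n_{\alpha,\beta}(\alpha)<\alpha$, $=\alpha$, $>\alpha$, truncated at the first $C$ if there is one; $\mathfrak M_\infty$ is the set of kneading sequences containing no $C$, i.e. those with $T^k_{\alpha,\beta}(\alpha)\ne\alpha$ for all $k\ge1$. The partition $\mathcal P_n^{(m)}$ consists of the nondegenerate closed intervals into which $[0,1]$ is cut by the points $0,1$ and all points of $T^{-j}_{\alpha_n,\beta_n}(\alpha_n)$, $0\le j\le m-1$. *)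

theory Defs
  imports "HOL-Analysis.Analysis"
begin

definition skew_tent :: "real \<Rightarrow> real \<Rightarrow> real \<Rightarrow> real" where
  "skew_tent \<alpha> \<beta> x = (if x \<le> \<alpha> then (\<beta> / \<alpha>) * x else (\<beta> / (1 - \<alpha>)) * (1 - x))"

definition U_region :: "(real \<times> real) set" where
  "U_region = {(\<alpha>, \<beta>). 1/2 < \<beta> \<and> \<beta> \<le> 1 \<and> 1 - \<beta> < \<alpha> \<and> \<alpha> < \<beta>}"

datatype kneading_symbol = L | C | R

definition kneading_sym :: "real \<Rightarrow> real \<Rightarrow> nat \<Rightarrow> kneading_symbol" where
  "kneading_sym \<alpha> \<beta> n =
     (let y = (skew_tent \<alpha> \<beta> ^^ n) \<alpha> in if y < \<alpha> then L else if y = \<alpha> then C else R)"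

definition kneading_in_M_infty :: "real \<Rightarrow> real \<Rightarrow> bool" where
  "kneading_in_M_infty \<alpha> \<beta> \<longleftrightarrow> (\<forall>n\<ge>1. kneading_sym \<alpha> \<beta> n \<noteq> C)"

definition cut_points :: "real \<Rightarrow> real \<Rightarrow> nat \<Rightarrow> real set" where
  "cut_points \<alpha> \<beta> m = {0, 1} \<union>
     {x \<in> {0..1}. \<exists>j<m. (skew_tent \<alpha> \<beta> ^^ j) x = \<alpha>}"

definition refined_partition :: "real \<Rightarrow> real \<Rightarrow> nat \<Rightarrow> real set set" where
  "refined_partition \<alpha> \<beta> m =
     {{a..b} | a b. a < b \<and> a \<in> cut_points \<alpha> \<beta> m \<and> b \<in> cut_points \<alpha> \<beta> m
                   \<and> cut_points \<alpha> \<beta> m \<inter> {a<..<b} = {}}"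

end

theory Submission
  imports Defs
begin

text \<open>
  Write \<open>T\<close> for \<open>T\<^sub>\<alpha>\<^sub>,\<^sub>\<beta>\<close>. Some iterate \<open>T\<^sup>j\<close>, \<open>j < m\<close>, separates two adjacent cut points
  \<open>p < q\<close> by a definite distance \<open>D\<close>: if \<open>T\<^sup>k p = T\<^sup>k q\<close> for some \<open>k \<le> m\<close>, then by the intermediate
  value theorem an earlier preimage of \<open>\<alpha>\<close> would lie strictly between them; otherwise the orbits
  of \<open>p\<close> and \<open>q\<close> reach \<open>\<alpha>\<close> at one time and \<open>0\<close>, \<open>1\<close> or a point \<open>T\<^sup>i \<alpha>\<close> with \<open>1 \<le> i < m\<close> at the
  other. Since no \<open>T\<^sup>i\<^sub>0 \<alpha>\<^sub>0\<close> equals \<open>\<alpha>\<^sub>0\<close>, continuity keeps \<open>T\<^sup>i\<^sub>n \<alpha>\<^sub>n\<close> uniformly away from \<open>\<alpha>\<^sub>n\<close> for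
  large \<open>n\<close>, and \<open>\<alpha>\<^sub>n\<close> stays away from \<open>0\<close> and \<open>1\<close>. As all \<open>T\<^sub>n\<close> are then Lipschitz with a
  common constant \<open>L\<close>, we get \<open>q - p \<ge> D / L\<^sup>m\<close>. Each of the finitely many remaining \<open>n\<close> has a
  finite partition.
\<close>

lemma skew_tent_eq_min:
  fixes a b x :: real
  assumes "0 < a" "a < 1" "0 \<le> b"
  shows "skew_tent a b x = min (b / a * x) (b / (1 - a) * (1 - x))"
proof (cases "x \<le> a")
  case True
  then have "b * x \<le> b * a" using assms by (simp add: mult_left_mono)
  then have "b * x * (1 - a) \<le> b * (1 - x) * a" by (simp add: algebra_simps)
  then show ?thesis using True assms by (simp add: skew_tent_def field_simps)
next
  case False
  then have "b * a \<le> b * x" using assms by (simp add: mult_left_mono)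
  then have "b * (1 - x) * a \<le> b * x * (1 - a)" by (simp add: algebra_simps)
  then show ?thesis using False assms by (simp add: skew_tent_def field_simps)
qed

lemma continuous_on_skew_tent:
  "0 < a \<Longrightarrow> a < 1 \<Longrightarrow> 0 \<le> (b::real) \<Longrightarrow> continuous_on S (skew_tent a b)"
  by (simp add: skew_tent_eq_min continuous_intros)

lemma skew_tent_in_unit_interval:
  fixes a b x :: real
  assumes "0 < a" "a < 1" "0 \<le> b" "b \<le> 1" "x \<in> {0..1}"
  shows "skew_tent a b x \<in> {0..1}"
  using assms mult_left_le_one_le[of x b] mult_left_le_one_le[of "1 - x" b] mult_left_le[of x b]
  by (auto simp: skew_tent_def field_simps)

lemma abs_min_diff_le: "\<bar>min u v - min u' v'\<bar> \<le> max \<bar>u - u'\<bar> \<bar>v - v'\<bar>" for u v u' v' :: real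
  by (simp add: min_def max_def abs_if)

lemma skew_tent_lipschitz:
  fixes a b x y L :: real
  assumes "0 < a" "a < 1" "0 \<le> b" "b / a \<le> L" "b / (1 - a) \<le> L"
  shows "\<bar>skew_tent a b x - skew_tent a b y\<bar> \<le> L * \<bar>x - y\<bar>"
proof -
  have affine: "\<bar>c * u - c * v\<bar> \<le> L * \<bar>x - y\<bar>"
    if "0 \<le> c" "c \<le> L" "\<bar>u - v\<bar> = \<bar>x - y\<bar>" for c u v
    using that by (simp add: abs_mult mult_right_mono flip: right_diff_distrib)
  have "\<bar>skew_tent a b x - skew_tent a b y\<bar>
      \<le> max \<bar>b / a * x - b / a * y\<bar> \<bar>b / (1 - a) * (1 - x) - b / (1 - a) * (1 - y)\<bar>"
    unfolding skew_tent_eq_min[OF assms(1-3)] by (rule abs_min_diff_le)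
  also have "\<dots> \<le> L * \<bar>x - y\<bar>"
    using assms by (intro max.boundedI affine) (auto simp: abs_minus_commute)
  finally show ?thesis .
qed

lemma funpow_skew_tent_lipschitz:
  fixes a b x y L :: real
  assumes "0 < a" "a < 1" "0 \<le> b" "b / a \<le> L" "b / (1 - a) \<le> L"
  shows "\<bar>(skew_tent a b ^^ j) x - (skew_tent a b ^^ j) y\<bar> \<le> L ^ j * \<bar>x - y\<bar>"
proof (induction j)
  case 0
  then show ?case by simp
next
  case (Suc j)
  have "0 \<le> L" using assms by (smt (verit) divide_nonneg_pos)
  have "\<bar>(skew_tent a b ^^ Suc j) x - (skew_tent a b ^^ Suc j) y\<bar>
      \<le> L * \<bar>(skew_tent a b ^^ j) x - (skew_tent a b ^^ j) y\<bar>"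
    using skew_tent_lipschitz[OF assms] by simp
  also have "\<dots> \<le> L * (L ^ j * \<bar>x - y\<bar>)"
    using Suc \<open>0 \<le> L\<close> by (simp add: mult_left_mono)
  finally show ?case by (simp add: mult.assoc)
qed

lemma funpow_skew_tent_zero: "0 < (a::real) \<Longrightarrow> (skew_tent a b ^^ j) 0 = 0"
  by (induction j) (auto simp: skew_tent_def)

lemma funpow_skew_tent_one:
  "0 < (a::real) \<Longrightarrow> a < 1 \<Longrightarrow> (skew_tent a b ^^ Suc j) 1 = 0"
  by (simp add: funpow_Suc_right skew_tent_def funpow_skew_tent_zero del: funpow.simps)

lemma skew_tent_eq_imp_between:
  fixes a b x y :: real
  assumes "0 < a" "a < 1" "0 < b" "x < y" "skew_tent a b x = skew_tent a b y"
  shows "x < a \<and> a < y"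
proof -
  have "\<not> (x \<le> a \<and> y \<le> a)" "\<not> (a < x \<and> a < y)"
    using assms by (auto simp: skew_tent_def)
  moreover have "x \<noteq> a"
    using assms by (auto simp: skew_tent_def field_simps)
  ultimately show ?thesis using assms(4) by linarith
qed

lemma funpow_skew_tent_eq_imp_preimage_between:
  fixes a b :: real
  assumes "0 < a" "a < 1" "0 < b" "b \<le> 1"
  shows "x < y \<Longrightarrow> x \<in> {0..1} \<Longrightarrow> y \<in> {0..1} \<Longrightarrow>
    (skew_tent a b ^^ j) x = (skew_tent a b ^^ j) y \<Longrightarrow>
    \<exists>z\<in>{x<..<y}. \<exists>i<j. (skew_tent a b ^^ i) z = a"
proof (induction j arbitrary: x y)
  case 0
  then show ?case by simp
next
  case (Suc j)
  let ?T = "skew_tent a b"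
  have eq: "(?T ^^ j) (?T x) = (?T ^^ j) (?T y)"
    using Suc.prems(4) by (simp add: funpow_Suc_right del: funpow.simps)
  have in01: "?T x \<in> {0..1}" "?T y \<in> {0..1}"
    using Suc.prems(2,3) assms skew_tent_in_unit_interval by auto
  have cont: "continuous_on {x..y} ?T"
    using assms by (simp add: continuous_on_skew_tent)
  have lift: "\<exists>z\<in>{x<..<y}. \<exists>i<Suc j. (?T ^^ i) z = a"
    if w: "w \<in> {min (?T x) (?T y)<..<max (?T x) (?T y)}" and i: "i < j" "(?T ^^ i) w = a" for w i
  proof -
    obtain z where z: "x \<le> z" "z \<le> y" "?T z = w"
    proof (cases "?T x \<le> ?T y")
      case True
      then show ?thesis using that IVT'[of ?T x w y] w cont Suc.prems(1) by auto
    next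
      case False
      then show ?thesis using that IVT2'[of ?T y w x] w cont Suc.prems(1) by auto
    qed
    moreover have "z \<noteq> x" "z \<noteq> y"
      using w z(3) by (auto simp: min_def max_def split: if_splits)
    ultimately have "z \<in> {x<..<y}" by auto
    moreover have "(?T ^^ Suc i) z = a" using \<open>?T z = w\<close> i by (simp add: funpow_Suc_right del: funpow.simps)
    ultimately show ?thesis using i by blast
  qed
  consider "?T x = ?T y" | "?T x < ?T y" | "?T y < ?T x" by linarith
  then show ?case
  proof cases
    case 1
    then have "a \<in> {x<..<y}" using skew_tent_eq_imp_between[OF assms(1-3) Suc.prems(1)] by auto
    then show ?thesis by force
  next
    case 2
    then show ?thesis using Suc.IH[OF 2 in01 eq] lift by auto
  next
    case 3
    then show ?thesis using Suc.IH[OF 3 in01(2,1) eq[symmetric]] lift by auto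
  qed
qed

lemma finite_funpow_skew_tent_preimage:
  fixes a b c :: real
  assumes "0 < a" "a < 1" "0 < b"
  shows "finite {x. (skew_tent a b ^^ j) x = c}"
proof (induction j)
  case 0
  then show ?case by simp
next
  case (Suc j)
  let ?S = "{y. (skew_tent a b ^^ j) y = c}"
  have "{x. (skew_tent a b ^^ Suc j) x = c}
      \<subseteq> (\<lambda>y. a * y / b) ` ?S \<union> (\<lambda>y. 1 - (1 - a) * y / b) ` ?S"
  proof
    fix x
    assume "x \<in> {x. (skew_tent a b ^^ Suc j) x = c}"
    then have "skew_tent a b x \<in> ?S" by (simp add: funpow_Suc_right del: funpow.simps)
    moreover have "x = a * skew_tent a b x / b \<or> x = 1 - (1 - a) * skew_tent a b x / b"
      using assms by (simp add: skew_tent_def)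
    ultimately show "x \<in> (\<lambda>y. a * y / b) ` ?S \<union> (\<lambda>y. 1 - (1 - a) * y / b) ` ?S" by blast
  qed
  then show ?case by (rule finite_subset) (simp add: Suc)
qed

lemma finite_cut_points:
  fixes a b :: real
  assumes "0 < a" "a < 1" "0 < b"
  shows "finite (cut_points a b m)"
proof (rule finite_subset)
  show "cut_points a b m \<subseteq> {0, 1} \<union> (\<Union>j<m. {x. (skew_tent a b ^^ j) x = a})"
    unfolding cut_points_def by auto
  show "finite ({0, 1} \<union> (\<Union>j<m. {x. (skew_tent a b ^^ j) x = a}))"
    using finite_funpow_skew_tent_preimage[OF assms] by simp
qed

lemma refined_partition_measure_lower_bound:
  fixes a b :: real
  assumes "0 < a" "a < 1" "0 < b"
  shows "\<exists>\<delta>>0. \<forall>I\<in>refined_partition a b m. \<delta> \<le> measure lborel I"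
proof -
  let ?F = "cut_points a b m"
  let ?S = "(\<lambda>(p, q). q - p) ` (Set.filter (\<lambda>(p, q). p < q) (?F \<times> ?F))"
  have "finite ?S" using finite_cut_points[OF assms] by simp
  moreover have "(1 - 0 :: real) \<in> ?S"
    by (rule image_eqI[of _ _ "(0, 1)"]) (auto simp: cut_points_def)
  ultimately have "0 < Min ?S" by (subst Min_gr_iff) auto
  moreover have "Min ?S \<le> measure lborel I" if I: "I \<in> refined_partition a b m" for I
  proof -
    obtain p q where "I = {p..q}" "p < q" "p \<in> ?F" "q \<in> ?F"
      using I unfolding refined_partition_def by blast
    then show ?thesis using \<open>finite ?S\<close> by (auto intro!: Min_le image_eqI[of _ _ "(p, q)"])
  qed
  ultimately show ?thesis by blast
qed

lemma cut_points_cases: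
  assumes "x \<in> cut_points a b m"
  shows "x \<in> {0..1} \<and> (x = 0 \<or> x = 1 \<or> (\<exists>k<m. (skew_tent a b ^^ k) x = a))"
  using assms unfolding cut_points_def by auto

lemma funpow_skew_tent_neq_at_adjacent_cut_points:
  fixes a b :: real
  assumes "0 < a" "a < 1" "0 < b" "b \<le> 1"
    and "p < q" "p \<in> cut_points a b m" "q \<in> cut_points a b m"
    and "cut_points a b m \<inter> {p<..<q} = {}" "k \<le> m"
  shows "(skew_tent a b ^^ k) p \<noteq> (skew_tent a b ^^ k) q"
proof
  assume eq: "(skew_tent a b ^^ k) p = (skew_tent a b ^^ k) q"
  have pq: "p \<in> {0..1}" "q \<in> {0..1}"
    using cut_points_cases assms(6,7) by blast+
  obtain z i where z: "z \<in> {p<..<q}" "i < k" "(skew_tent a b ^^ i) z = a"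
    using funpow_skew_tent_eq_imp_preimage_between[OF assms(1-5) pq eq] by blast
  have "z \<in> {0..1}" "i < m" using z(1,2) pq assms(9) by auto
  then have "z \<in> cut_points a b m" using z(3) unfolding cut_points_def by blast
  then show False using z(1) assms(8) by blast
qed

lemma adjacent_cut_points_orbits_separated:
  fixes a b D :: real
  assumes a: "0 < a" "a < 1" and b: "0 < b" "b \<le> 1"
    and D: "D \<le> a" "D \<le> 1 - a" "\<forall>i\<in>{1..<m}. D \<le> \<bar>(skew_tent a b ^^ i) a - a\<bar>"
    and pq: "p < q" "p \<in> cut_points a b m" "q \<in> cut_points a b m"
      "cut_points a b m \<inter> {p<..<q} = {}"
    and "1 \<le> m"
  shows "\<exists>j<m. D \<le> \<bar>(skew_tent a b ^^ j) q - (skew_tent a b ^^ j) p\<bar>"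
proof -
  let ?T = "skew_tent a b"
  note neq = funpow_skew_tent_neq_at_adjacent_cut_points[OF a b pq]
  have p: "p = 0 \<or> (\<exists>k<m. (?T ^^ k) p = a)" and q: "q = 1 \<or> (\<exists>k<m. (?T ^^ k) q = a)"
    using cut_points_cases[OF pq(2)] cut_points_cases[OF pq(3)] pq(1) by auto
  consider "p = 0" "q = 1" | kq where "p = 0" "kq < m" "(?T ^^ kq) q = a"
    | kp where "q = 1" "kp < m" "(?T ^^ kp) p = a"
    | kp kq where "kp < m" "(?T ^^ kp) p = a" "kq < m" "(?T ^^ kq) q = a"
    using p q by blast
  then show ?thesis
  proof cases
    case 1
    then show ?thesis using neq[of 1] \<open>1 \<le> m\<close> a by (simp add: skew_tent_def)
  next
    case 2
    then show ?thesis using D(1) a by (auto simp: funpow_skew_tent_zero)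
  next
    case (3 kp)
    then show ?thesis using D(1,2) a
      by (intro exI[of _ kp]) (cases kp, auto simp: funpow_skew_tent_one simp del: funpow.simps)
  next
    case (4 kp kq)
    have shift: "(?T ^^ l) x = (?T ^^ (l - k)) a" if "(?T ^^ k) x = a" "k \<le> l" for x k l
      using that funpow_add[of "l - k" k ?T] by (simp add: le_add_diff_inverse2)
    consider "kp = kq" | "kp < kq" | "kq < kp" by linarith
    then show ?thesis
    proof cases
      case 1
      then show ?thesis using neq[of kp] 4 by simp
    next
      case 2
      then have "kq - kp \<in> {1..<m}" using 4 by auto
      then have "D \<le> \<bar>(?T ^^ (kq - kp)) a - a\<bar>" using D(3) by blast
      then show ?thesis using 2 4 shift[of kp p kq]
        by (intro exI[of _ kq]) (auto simp: abs_minus_commute)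
    next
      case 3
      then have "kp - kq \<in> {1..<m}" using 4 by auto
      then have "D \<le> \<bar>(?T ^^ (kp - kq)) a - a\<bar>" using D(3) by blast
      then show ?thesis using 3 4 shift[of kq q kp] by (intro exI[of _ kp]) auto
    qed
  qed
qed

lemma refined_partition_measure_ge:
  fixes a b L D :: real
  assumes a: "0 < a" "a < 1" and b: "0 < b" "b \<le> 1"
    and L: "b / a \<le> L" "b / (1 - a) \<le> L" "1 \<le> L"
    and D: "D \<le> a" "D \<le> 1 - a" "\<forall>i\<in>{1..<m}. D \<le> \<bar>(skew_tent a b ^^ i) a - a\<bar>"
    and "1 \<le> m" and I: "I \<in> refined_partition a b m"
  shows "D / L ^ m \<le> measure lborel I"
proof -
  let ?T = "skew_tent a b"
  obtain p q where pq: "p < q" "p \<in> cut_points a b m" "q \<in> cut_points a b m"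
      "cut_points a b m \<inter> {p<..<q} = {}" and "I = {p..q}"
    using I unfolding refined_partition_def by blast
  obtain j where "j < m" and separated: "D \<le> \<bar>(?T ^^ j) q - (?T ^^ j) p\<bar>"
    using adjacent_cut_points_orbits_separated[OF a b D pq \<open>1 \<le> m\<close>] by blast
  note separated
  also have "\<dots> \<le> L ^ j * \<bar>q - p\<bar>"
    using funpow_skew_tent_lipschitz[OF a _ L(1,2)] b by simp
  also have "\<dots> = L ^ j * (q - p)"
    using pq(1) by simp
  also have "\<dots> \<le> L ^ m * (q - p)"
    using pq(1) L(3) \<open>j < m\<close> by (intro mult_right_mono power_increasing) auto
  finally show ?thesis using \<open>I = {p..q}\<close> pq(1) L(3) by (simp add: divide_simps mult.commute)
qed

lemma tendsto_skew_tent: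
  fixes a b x :: "nat \<Rightarrow> real"
  assumes "\<And>n. 0 < a n" "\<And>n. a n < 1" "\<And>n. 0 \<le> b n" "0 < a0" "a0 < 1" "0 \<le> b0"
    and "a \<longlonglongrightarrow> a0" "b \<longlonglongrightarrow> b0" "x \<longlonglongrightarrow> x0"
  shows "(\<lambda>n. skew_tent (a n) (b n) (x n)) \<longlonglongrightarrow> skew_tent a0 b0 x0"
  unfolding skew_tent_eq_min[OF assms(1-3)] skew_tent_eq_min[OF assms(4-6)]
  using assms(4-9) by (intro tendsto_intros) auto

lemma tendsto_funpow_skew_tent:
  fixes a b x :: "nat \<Rightarrow> real"
  assumes "\<And>n. 0 < a n" "\<And>n. a n < 1" "\<And>n. 0 \<le> b n" "0 < a0" "a0 < 1" "0 \<le> b0"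
    and "a \<longlonglongrightarrow> a0" "b \<longlonglongrightarrow> b0" "x \<longlonglongrightarrow> x0"
  shows "(\<lambda>n. (skew_tent (a n) (b n) ^^ i) (x n)) \<longlonglongrightarrow> (skew_tent a0 b0 ^^ i) x0"
  by (induction i) (auto intro: tendsto_skew_tent[OF assms(1-8)] assms(9))

lemma eventually_critical_orbit_separated:
  fixes a b :: "nat \<Rightarrow> real"
  assumes "\<And>n. 0 < a n" "\<And>n. a n < 1" "\<And>n. 0 \<le> b n" "0 < a0" "a0 < 1" "0 \<le> b0"
    and "a \<longlonglongrightarrow> a0" "b \<longlonglongrightarrow> b0"
    and "\<forall>i\<in>{1..<m}. (skew_tent a0 b0 ^^ i) a0 \<noteq> a0"
  shows "\<exists>D>0. eventually (\<lambda>n. \<forall>i\<in>{1..<m}. D \<le> \<bar>(skew_tent (a n) (b n) ^^ i) (a n) - a n\<bar>)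
    sequentially"
proof -
  define dist0 where "dist0 i = \<bar>(skew_tent a0 b0 ^^ i) a0 - a0\<bar>" for i
  define D where "D = Min (insert 1 (dist0 ` {1..<m})) / 2"
  have "0 < D" using assms(9) by (simp add: D_def dist0_def)
  moreover have "eventually (\<lambda>n. D \<le> \<bar>(skew_tent (a n) (b n) ^^ i) (a n) - a n\<bar>) sequentially"
    if i: "i \<in> {1..<m}" for i
  proof -
    have "Min (insert 1 (dist0 ` {1..<m})) \<le> dist0 i"
      using i by (intro Min_le) auto
    moreover have "0 < dist0 i"
      using i assms(9) by (simp add: dist0_def)
    ultimately have "D < dist0 i"
      by (simp add: D_def)
    moreover have "(\<lambda>n. \<bar>(skew_tent (a n) (b n) ^^ i) (a n) - a n\<bar>) \<longlonglongrightarrow> dist0 i"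
      unfolding dist0_def using tendsto_funpow_skew_tent[OF assms(1-8,7)] assms(7)
      by (intro tendsto_intros)
    ultimately have "eventually (\<lambda>n. D < \<bar>(skew_tent (a n) (b n) ^^ i) (a n) - a n\<bar>) sequentially"
      by (rule order_tendstoD(1)[rotated])
    then show ?thesis by (rule eventually_mono) simp
  qed
  ultimately show ?thesis by (auto intro!: eventually_ball_finite)
qed

lemma eventually_refined_partition_measure_ge:
  fixes a b :: "nat \<Rightarrow> real"
  assumes a: "\<And>n. 0 < a n" "\<And>n. a n < 1" and b: "\<And>n. 0 < b n" "\<And>n. b n \<le> 1"
    and "0 < a0" "a0 < 1" "0 \<le> b0" "a \<longlonglongrightarrow> a0" "b \<longlonglongrightarrow> b0"
    and "\<forall>i\<in>{1..<m}. (skew_tent a0 b0 ^^ i) a0 \<noteq> a0" "1 \<le> m"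
  shows "\<exists>\<delta>>0. eventually (\<lambda>n. \<forall>I\<in>refined_partition (a n) (b n) m. \<delta> \<le> measure lborel I)
    sequentially"
proof -
  define c where "c = min a0 (1 - a0) / 2"
  define L where "L = 1 / c"
  have "0 < c" "c \<le> 1" using assms(5,6) by (auto simp: c_def)
  then have "1 \<le> L" by (simp add: L_def)
  obtain D where "0 < D" and D: "eventually (\<lambda>n. \<forall>i\<in>{1..<m}.
      D \<le> \<bar>(skew_tent (a n) (b n) ^^ i) (a n) - a n\<bar>) sequentially"
    using eventually_critical_orbit_separated[OF a less_imp_le[OF b(1)] assms(5-10)] by blast
  have "eventually (\<lambda>n. c < a n \<and> a n < 1 - c) sequentially"
    using \<open>0 < c\<close>
    by (intro eventually_conj order_tendstoD[OF assms(8)]) (auto simp: c_def min_def field_simps)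
  with D have "eventually (\<lambda>n. \<forall>I\<in>refined_partition (a n) (b n) m.
      min D c / L ^ m \<le> measure lborel I) sequentially"
  proof (rule eventually_elim2, intro ballI)
    fix n I
    assume D_n: "\<forall>i\<in>{1..<m}. D \<le> \<bar>(skew_tent (a n) (b n) ^^ i) (a n) - a n\<bar>"
      and a_n: "c < a n \<and> a n < 1 - c" and "I \<in> refined_partition (a n) (b n) m"
    moreover have "b n / a n \<le> L" "b n / (1 - a n) \<le> L"
      using a_n \<open>0 < c\<close> b[of n] unfolding L_def by (auto intro!: frac_le)
    ultimately show "min D c / L ^ m \<le> measure lborel I"
      using refined_partition_measure_ge[OF a b _ _ \<open>1 \<le> L\<close> _ _ _ \<open>1 \<le> m\<close>, where D = "min D c"]
      by fastforce
  qed
  then show ?thesis using \<open>0 < D\<close> \<open>0 < c\<close> \<open>1 \<le> L\<close> by (intro exI[of _ "min D c / L ^ m"]) auto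
qed

lemma uniform_lower_bound_from_eventually:
  fixes f :: "'a \<Rightarrow> real" and A :: "nat \<Rightarrow> 'a set"
  assumes "\<And>n. \<exists>\<delta>>0. \<forall>x\<in>A n. \<delta> \<le> f x"
    and "\<exists>\<delta>>0. eventually (\<lambda>n. \<forall>x\<in>A n. \<delta> \<le> f x) sequentially"
  shows "\<exists>\<delta>>0. \<forall>n. \<forall>x\<in>A n. \<delta> \<le> f x"
proof -
  obtain \<epsilon> N where "0 < \<epsilon>" and late: "\<And>n. N \<le> n \<Longrightarrow> \<forall>x\<in>A n. \<epsilon> \<le> f x"
    using assms(2) unfolding eventually_sequentially by blast
  obtain g where g: "\<And>n. 0 < g n" "\<And>n. \<forall>x\<in>A n. g n \<le> f x"
    using assms(1) by metis
  define \<delta> where "\<delta> = Min (insert \<epsilon> (g ` {..<N}))"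
  have "0 < \<delta>" using g(1) \<open>0 < \<epsilon>\<close> by (simp add: \<delta>_def)
  moreover have "\<delta> \<le> f x" if "x \<in> A n" for n x
  proof (cases "n < N")
    case True
    then have "\<delta> \<le> g n" by (simp add: \<delta>_def)
    then show ?thesis using g(2) that by fastforce
  next
    case False
    have "\<delta> \<le> \<epsilon>" by (simp add: \<delta>_def)
    then show ?thesis using late[of n] False that by fastforce
  qed
  ultimately show ?thesis by blast
qed

theorem lemma3p2:
  fixes \<alpha> \<beta> :: "nat \<Rightarrow> real"
  assumes "\<And>n. (\<alpha> n, \<beta> n) \<in> U_region"
    and "kneading_in_M_infty (\<alpha> 0) (\<beta> 0)"
    and "(\<lambda>n. (\<alpha> n, \<beta> n)) \<longlonglongrightarrow> (\<alpha> 0, \<beta> 0)"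
  shows "\<forall>m\<ge>1. \<exists>\<delta>>0. \<forall>n. \<forall>I\<in>refined_partition (\<alpha> n) (\<beta> n) m.
           measure lborel I \<ge> \<delta>"
proof (intro allI impI)
  fix m :: nat
  assume "1 \<le> m"
  have \<alpha>: "0 < \<alpha> n" "\<alpha> n < 1" and \<beta>: "0 < \<beta> n" "\<beta> n \<le> 1" for n
    using assms(1)[of n] by (auto simp: U_region_def)
  have "\<alpha> \<longlonglongrightarrow> \<alpha> 0" "\<beta> \<longlonglongrightarrow> \<beta> 0"
    using tendsto_fst[OF assms(3)] tendsto_snd[OF assms(3)] by simp_all
  moreover have "\<forall>i\<in>{1..<m}. (skew_tent (\<alpha> 0) (\<beta> 0) ^^ i) (\<alpha> 0) \<noteq> \<alpha> 0"
    using assms(2) by (auto simp: kneading_in_M_infty_def kneading_sym_def Let_def)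
  ultimately have "\<exists>\<delta>>0. eventually (\<lambda>n. \<forall>I\<in>refined_partition (\<alpha> n) (\<beta> n) m.
      \<delta> \<le> measure lborel I) sequentially"
    using eventually_refined_partition_measure_ge[of \<alpha> \<beta>, OF \<alpha> \<beta> \<alpha>(1,2) less_imp_le[OF \<beta>(1)]]
      \<open>1 \<le> m\<close> by blast
  then show "\<exists>\<delta>>0. \<forall>n. \<forall>I\<in>refined_partition (\<alpha> n) (\<beta> n) m. measure lborel I \<ge> \<delta>"
    using refined_partition_measure_lower_bound[OF \<alpha> \<beta>(1)]
    by (intro uniform_lower_bound_from_eventually)
qed

end
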